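(* Let $\mathcal{D}\in\mathbb{C}^{\mathbf{N}(s)\times\mathbf{N}(s)}$ with $\mathrm{ind}(\mathcal{D})=k$, and let $\mathcal{B}\in\mathscr{R}(\mathcal{D}^k)$. Then $\mathcal{D}^{c,\dagger}*_s\mathcal{B}$ is the unique solution $\mathcal{Z}$ of the multilinear system $\mathcal{D}*_s\mathcal{Z}=\mathcal{B}$ lying in $\mathscr{R}(\mathcal{D}^\dagger*_s\mathcal{D}^k)$.
   Context: For positive integers $N_1,\dots,N_s$ write $\mathbf{N}(s)=N_1\times\cdots\times N_s$. For $\mathcal{A}\in\mathbb{C}^{\mathbf{I}(m)\times\mathbf{K}(p)}$ and $\mathcal{B}\in\mathbb{C}^{\mathbf{K}(p)\times\mathbf{J}(n)}$ the Einstein product is the tensor $\mathcal{A}*_p\mathcal{B}\in\mathbb{C}^{\mathbf{I}(m)\times\mathbf{J}(n)}$ with entries $(\mathcal{A}*_p\mathcal{B})_{i_1\dots i_m j_1\dots j_n}=\sum_{k_1,\dots,k_p}\mathcal{A}_{i_1\dots i_m k_1\dots k_p}\mathcal{B}_{k_1\dots k_p j_1\dots j_n}$; the case $n=0$ (so $\mathcal{B}\in\mathbb{C}^{\mathbf{K}(p)}$) is allowed. For $\mathcal{D}\in\mathbb{C}^{\mathbf{N}(s)\times\mathbf{N}(s)}$, powers are $\mathcal{D}^0=\mathcal{I}$, $\mathcal{D}^{j+1}=\mathcal{D}*_s\mathcal{D}^j$, where $\mathcal{I}$ is the identity tensor with entries $\mathcal{I}_{i_1\dots i_s j_1\dots j_s}=\prod_{t=1}^s\delta_{i_tj_t}$.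 The conjugate transpose $\mathcal{A}^*$ of $\mathcal{A}\in\mathbb{C}^{\mathbf{M}(m)\times\mathbf{N}(n)}$ has entries $(\mathcal{A}^* )_{j_1\dots j_n i_1\dots i_m}=\overline{\mathcal{A}_{i_1\dots i_m j_1\dots j_n}}$. For $\mathcal{A}\in\mathbb{C}^{\mathbf{M}(m)\times\mathbf{N}(n)}$, $\mathscr{R}(\mathcal{A})=\{\mathcal{A}*_n\mathcal{E}:\mathcal{E}\in\mathbb{C}^{\mathbf{N}(n)}\}$ and $\mathscr{N}(\mathcal{A})=\{\mathcal{F}\in\mathbb{C}^{\mathbf{N}(n)}:\mathcal{A}*_n\mathcal{F}=\mathcal{O}\}$. The index $\mathrm{ind}(\mathcal{D})$ of $\mathcal{D}\in\mathbb{C}^{\mathbf{N}(s)\times\mathbf{N}(s)}$ is the smallest nonnegative integer $k$ with $\dim\mathscr{R}(\mathcal{D}^k)=\dim\mathscr{R}(\mathcal{D}^{k+1})$. The Moore–Penrose inverse $\mathcal{D}^\dagger$ of $\mathcal{D}\in\mathbb{C}^{\mathbf{N}(s)\times\mathbf{N}(s)}$ is the unique $\mathcal{Y}$ with $\mathcal{D}*_s\mathcal{Y}*_s\mathcal{D}=\mathcal{D}$, $\mathcal{Y}*_s\mathcal{D}*_s\mathcal{Y}=\mathcal{Y}$, $(\mathcal{D}*_s\mathcal{Y})^*=\mathcal{D}*_s\mathcal{Y}$, $(\mathcal{Y}*_s\mathcal{D})^*=\mathcal{Y}*_s\mathcal{D}$. With $k=\mathrm{ind}(\mathcal{D})$,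 the Drazin inverse $\mathcal{D}^{\mathrm D}$ is the unique $\mathcal{Y}$ with $\mathcal{Y}*_s\mathcal{D}^{k+1}=\mathcal{D}^k$, $\mathcal{Y}*_s\mathcal{D}*_s\mathcal{Y}=\mathcal{Y}$, $\mathcal{D}*_s\mathcal{Y}=\mathcal{Y}*_s\mathcal{D}$. The CMP inverse is $\mathcal{D}^{c,\dagger}=\mathcal{D}^\dagger*_s\mathcal{D}*_s\mathcal{D}^{\mathrm D}*_s\mathcal{D}*_s\mathcal{D}^\dagger$. *)

theory Defs
  imports Complex_Main "HOL-Library.Function_Algebras"
begin

text \<open>A tensor in C^{N(s)} is a function nat list => complex vanishing outside the
 multi-index set; a tensor in C^{N(s) x N(s)} is a function of two multi-indices
 vanishing unless both are valid.\<close>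

definition idx :: "nat list \<Rightarrow> nat list set" where
  "idx N = {is. length is = length N \<and> (\<forall>t<length N. is ! t < N ! t)}"

definition tensor1 :: "nat list \<Rightarrow> (nat list \<Rightarrow> complex) \<Rightarrow> bool" where
  "tensor1 N B \<longleftrightarrow> (\<forall>i. i \<notin> idx N \<longrightarrow> B i = 0)"

definition tensor2 :: "nat list \<Rightarrow> (nat list \<Rightarrow> nat list \<Rightarrow> complex) \<Rightarrow> bool" where
  "tensor2 N A \<longleftrightarrow> (\<forall>i j. i \<notin> idx N \<or> j \<notin> idx N \<longrightarrow> A i j = 0)"

definition ein :: "nat list \<Rightarrow> (nat list \<Rightarrow> nat list \<Rightarrow> complex) \<Rightarrow>
    (nat list \<Rightarrow> nat list \<Rightarrow> complex) \<Rightarrow> (nat list \<Rightarrow> nat list \<Rightarrow> complex)" where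
  "ein N A B = (\<lambda>i j. if i \<in> idx N \<and> j \<in> idx N
      then \<Sum>k\<in>idx N. A i k * B k j else 0)"

definition einv :: "nat list \<Rightarrow> (nat list \<Rightarrow> nat list \<Rightarrow> complex) \<Rightarrow>
    (nat list \<Rightarrow> complex) \<Rightarrow> (nat list \<Rightarrow> complex)" where
  "einv N A E = (\<lambda>i. if i \<in> idx N then \<Sum>k\<in>idx N. A i k * E k else 0)"

definition tid :: "nat list \<Rightarrow> (nat list \<Rightarrow> nat list \<Rightarrow> complex)" where
  "tid N = (\<lambda>i j. if i \<in> idx N \<and> j \<in> idx N \<and> i = j then 1 else 0)"

fun tpow :: "nat list \<Rightarrow> (nat list \<Rightarrow> nat list \<Rightarrow> complex) \<Rightarrow> nat \<Rightarrow>
    (nat list \<Rightarrow> nat list \<Rightarrow> complex)" where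
  "tpow N D 0 = tid N"
| "tpow N D (Suc j) = ein N D (tpow N D j)"

definition ctrans :: "(nat list \<Rightarrow> nat list \<Rightarrow> complex) \<Rightarrow> (nat list \<Rightarrow> nat list \<Rightarrow> complex)" where
  "ctrans A = (\<lambda>j i. cnj (A i j))"

definition trange :: "nat list \<Rightarrow> (nat list \<Rightarrow> nat list \<Rightarrow> complex) \<Rightarrow> (nat list \<Rightarrow> complex) set" where
  "trange N A = {einv N A E | E. tensor1 N E}"

definition cdim :: "(nat list \<Rightarrow> complex) set \<Rightarrow> nat" where
  "cdim S = vector_space.dim (\<lambda>(c::complex) f x. c * f x) S"

definition tind :: "nat list \<Rightarrow> (nat list \<Rightarrow> nat list \<Rightarrow> complex) \<Rightarrow> nat" where
  "tind N D = (LEAST k. cdim (trange N (tpow N D k)) = cdim (trange N (tpow N D (Suc k))))"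

definition mpinv :: "nat list \<Rightarrow> (nat list \<Rightarrow> nat list \<Rightarrow> complex) \<Rightarrow> (nat list \<Rightarrow> nat list \<Rightarrow> complex)" where
  "mpinv N D = (THE Y. tensor2 N Y \<and> ein N (ein N D Y) D = D \<and> ein N (ein N Y D) Y = Y
      \<and> ctrans (ein N D Y) = ein N D Y \<and> ctrans (ein N Y D) = ein N Y D)"

definition drazin :: "nat list \<Rightarrow> (nat list \<Rightarrow> nat list \<Rightarrow> complex) \<Rightarrow> (nat list \<Rightarrow> nat list \<Rightarrow> complex)" where
  "drazin N D = (let k = tind N D in THE Y. tensor2 N Y \<and> ein N Y (tpow N D (Suc k)) = tpow N D k
      \<and> ein N (ein N Y D) Y = Y \<and> ein N D Y = ein N Y D)"

definition cmp :: "nat list \<Rightarrow> (nat list \<Rightarrow> nat list \<Rightarrow> complex) \<Rightarrow> (nat list \<Rightarrow> nat list \<Rightarrow> complex)" where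
  "cmp N D = ein N (mpinv N D) (ein N D (ein N (drazin N D) (ein N D (mpinv N D))))"

end

theory Submission
  imports Defs
begin

text \<open>Write D' and D^D for the Moore--Penrose and Drazin inverses of D and k for its index.
  From D D' D = D, D^D D^(k+1) = D^k and D D^D = D^D D one gets D D' D^k = D^k and
  D^(c,') D^k = D' D^k. So for B = D^k E the tensor D^(c,') B = D' D^k E solves D Z = B inside
  R(D' D^k), and any solution Z = D' D^k G there has D^k G = D Z = B, hence Z = D' B.

  The real work is that D' and D^D, which are defined by definite description, exist. Both come
  from the linear dependence of the powers of D in the finite-dimensional tensor space: it gives
  D^m = D^(m+1) X with X commuting with D, from which D^D = D^m X^(m+1) (it satisfies the Drazin
  equation at the index k because R(D^k) = R(D^(k+1))), and, applied to the Hermitian D* D, whose powers cannot lose rank,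
  a Hermitian group inverse G of D* D with D' = G D*.\<close>

lemma sum_fun_apply: "sum F S x = (\<Sum>s\<in>S. F s x)"
  by (induction S rule: infinite_finite_induct) auto

lemma finite_idx: "finite (idx N)"
proof -
  define b where "b = Max (insert 0 (set N))"
  have "x < b" if xs: "xs \<in> idx N" and "x \<in> set xs" for xs x
  proof -
    have "length xs = length N" using xs by (simp add: idx_def)
    then obtain t where t: "t < length N" "xs ! t = x"
      using \<open>x \<in> set xs\<close> by (metis in_set_conv_nth)
    then have "x < N ! t" using xs by (auto simp: idx_def)
    also have "N ! t \<le> b" unfolding b_def using t by (intro Max_ge) auto
    finally show ?thesis .
  qed
  then have "idx N \<subseteq> {xs. set xs \<subseteq> {..<b} \<and> length xs = length N}"
    by (auto simp: idx_def)
  then show ?thesis by (rule finite_subset) (rule finite_lists_length_eq, simp)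
qed

lemma (in vector_space) subspace_eq_of_dim_eq:
  assumes "S \<subseteq> T" and "subspace S" and "T \<subseteq> span W" and "finite W" and "dim S = dim T"
  shows "T \<subseteq> S"
proof
  fix t assume "t \<in> T"
  obtain B where B: "B \<subseteq> S" "independent B" "S \<subseteq> span B" "card B = dim S"
    using basis_exists by blast
  obtain C where C: "C \<subseteq> T" "independent C" "T \<subseteq> span C" "card C = dim T"
    using basis_exists by blast
  have "finite B" using independent_span_bound[OF assms(4) B(2)] B(1) assms(1,3) by blast
  have "finite C" using independent_span_bound[OF assms(4) C(2)] C(1) assms(3) by blast
  show "t \<in> S"
  proof (rule ccontr)
    assume "t \<notin> S"
    then have "t \<notin> span B" using span_minimal[OF B(1) assms(2)] by blast
    then have "independent (insert t B)" using independent_insertI B(2) by blast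
    moreover have "insert t B \<subseteq> span C" using \<open>t \<in> T\<close> B(1) assms(1) C(3) by blast
    ultimately have "card (insert t B) \<le> card C" using independent_span_bound[OF \<open>finite C\<close>] by blast
    moreover have "card (insert t B) = Suc (card B)"
      using \<open>t \<notin> S\<close> B(1) \<open>finite B\<close> by (subst card_insert_disjoint) auto
    ultimately show False using B(4) C(4) assms(5) by simp
  qed
qed

definition tscale1 :: "complex \<Rightarrow> (nat list \<Rightarrow> complex) \<Rightarrow> (nat list \<Rightarrow> complex)"
  where "tscale1 c f = (\<lambda>i. c * f i)"

definition tscale2 :: "complex \<Rightarrow> (nat list \<Rightarrow> nat list \<Rightarrow> complex) \<Rightarrow> (nat list \<Rightarrow> nat list \<Rightarrow> complex)"
  where "tscale2 c A = (\<lambda>i j. c * A i j)"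

interpretation tvec: vector_space tscale1
  by unfold_locales (auto simp: tscale1_def algebra_simps fun_eq_iff)

interpretation tmat: vector_space tscale2
  by unfold_locales (auto simp: tscale2_def algebra_simps fun_eq_iff)

lemma cdim_eq_dim: "cdim S = tvec.dim S"
  by (simp add: cdim_def tscale1_def[abs_def])

context
  fixes N :: "nat list"
begin

abbreviation ein_N (infixr "\<cdot>" 70) where "A \<cdot> B \<equiv> ein N A B"

lemma tensor2_ein [simp]: "tensor2 N (A \<cdot> B)"
  by (simp add: tensor2_def ein_def)

lemma tensor1_einv [simp]: "tensor1 N (einv N A v)"
  by (simp add: tensor1_def einv_def)

lemma tensor2_tid [simp]: "tensor2 N (tid N)"
  by (simp add: tensor2_def tid_def)

lemma tensor2_tpow [simp]: "tensor2 N (tpow N A j)"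
  by (cases j) auto

lemma tensor2_diff [simp]: "tensor2 N A \<Longrightarrow> tensor2 N B \<Longrightarrow> tensor2 N (A - B)"
  by (simp add: tensor2_def)

lemma tensor2_tscale2 [simp]: "tensor2 N A \<Longrightarrow> tensor2 N (tscale2 c A)"
  by (simp add: tensor2_def tscale2_def)

lemma tensor2_sum: "(\<And>s. s \<in> S \<Longrightarrow> tensor2 N (F s)) \<Longrightarrow> tensor2 N (sum F S)"
  by (simp add: tensor2_def sum_fun_apply)

lemma tensor2_ctrans [simp]: "tensor2 N A \<Longrightarrow> tensor2 N (ctrans A)"
  by (auto simp: tensor2_def ctrans_def)

lemma ein_assoc: "(A \<cdot> B) \<cdot> C = A \<cdot> B \<cdot> C"
proof (intro ext)
  fix i j
  show "((A \<cdot> B) \<cdot> C) i j = (A \<cdot> B \<cdot> C) i j"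
  proof (cases "i \<in> idx N \<and> j \<in> idx N")
    case True
    have "((A \<cdot> B) \<cdot> C) i j = (\<Sum>k\<in>idx N. \<Sum>l\<in>idx N. A i l * B l k * C k j)"
      using True by (simp add: ein_def sum_distrib_right)
    also have "\<dots> = (\<Sum>l\<in>idx N. \<Sum>k\<in>idx N. A i l * B l k * C k j)"
      by (rule sum.swap)
    also have "\<dots> = (A \<cdot> B \<cdot> C) i j"
      using True by (simp add: ein_def sum_distrib_left mult.assoc)
    finally show ?thesis .
  qed (auto simp: ein_def)
qed

lemma einv_einv: "einv N A (einv N B v) = einv N (A \<cdot> B) v"
proof (intro ext)
  fix i
  show "einv N A (einv N B v) i = einv N (A \<cdot> B) v i"
  proof (cases "i \<in> idx N")
    case True
    have "einv N A (einv N B v) i = (\<Sum>k\<in>idx N. \<Sum>l\<in>idx N. A i k * B k l * v l)"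
      using True by (simp add: einv_def sum_distrib_left mult.assoc)
    also have "\<dots> = (\<Sum>l\<in>idx N. \<Sum>k\<in>idx N. A i k * B k l * v l)"
      by (rule sum.swap)
    also have "\<dots> = einv N (A \<cdot> B) v i"
      using True by (simp add: einv_def ein_def sum_distrib_right)
    finally show ?thesis .
  qed (auto simp: einv_def)
qed

lemma tid_ein [simp]: "tensor2 N A \<Longrightarrow> tid N \<cdot> A = A"
  by (auto simp: ein_def tid_def tensor2_def fun_eq_iff finite_idx if_distrib[of "\<lambda>x. x * _"]
      cong: if_cong)

lemma ein_tid [simp]: "tensor2 N A \<Longrightarrow> A \<cdot> tid N = A"
  by (auto simp: ein_def tid_def tensor2_def fun_eq_iff finite_idx if_distrib[of "\<lambda>x. _ * x"]
      cong: if_cong)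

lemma ctrans_ctrans [simp]: "ctrans (ctrans A) = A"
  by (simp add: ctrans_def)

lemma ctrans_ein: "ctrans (A \<cdot> B) = ctrans B \<cdot> ctrans A"
  by (auto simp: ctrans_def ein_def fun_eq_iff mult.commute)

lemma ctrans_diff: "ctrans (A - B) = ctrans A - ctrans B"
  by (auto simp: ctrans_def fun_eq_iff)

lemma ein_add_left: "(A + B) \<cdot> C = A \<cdot> C + B \<cdot> C"
  by (auto simp: ein_def fun_eq_iff algebra_simps sum.distrib)

lemma ein_add_right: "A \<cdot> (B + C) = A \<cdot> B + A \<cdot> C"
  by (auto simp: ein_def fun_eq_iff algebra_simps sum.distrib)

lemma ein_diff_left: "(A - B) \<cdot> C = A \<cdot> C - B \<cdot> C"
  by (auto simp: ein_def fun_eq_iff algebra_simps sum_subtractf)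

lemma ein_diff_right: "A \<cdot> (B - C) = A \<cdot> B - A \<cdot> C"
  by (auto simp: ein_def fun_eq_iff algebra_simps sum_subtractf)

lemma ein_zero_left [simp]: "0 \<cdot> A = 0"
  by (auto simp: ein_def fun_eq_iff)

lemma ein_zero_right [simp]: "A \<cdot> 0 = 0"
  by (auto simp: ein_def fun_eq_iff)

lemma ein_tscale2_left: "tscale2 c A \<cdot> B = tscale2 c (A \<cdot> B)"
  by (auto simp: ein_def tscale2_def fun_eq_iff algebra_simps sum_distrib_left)

lemma ein_tscale2_right: "A \<cdot> tscale2 c B = tscale2 c (A \<cdot> B)"
  by (auto simp: ein_def tscale2_def fun_eq_iff algebra_simps sum_distrib_left)

lemma ein_sum_left: "sum F S \<cdot> A = (\<Sum>s\<in>S. F s \<cdot> A)"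
proof (induction S rule: infinite_finite_induct)
  case (insert x S)
  then show ?case by (simp only: sum.insert ein_add_left not_False_eq_True)
qed (simp_all only: sum.infinite sum.empty ein_zero_left not_False_eq_True)

lemma ein_sum_right: "A \<cdot> sum F S = (\<Sum>s\<in>S. A \<cdot> F s)"
proof (induction S rule: infinite_finite_induct)
  case (insert x S)
  then show ?case by (simp only: sum.insert ein_add_right not_False_eq_True)
qed (simp_all only: sum.infinite sum.empty ein_zero_right not_False_eq_True)

lemma ctrans_ein_self_eq_0:
  assumes "tensor2 N B" and "ctrans B \<cdot> B = 0"
  shows "B = 0"
proof (intro ext)
  fix i j
  show "B i j = 0 i j"
  proof (cases "i \<in> idx N \<and> j \<in> idx N")
    case True
    have "(\<Sum>k\<in>idx N. complex_of_real ((cmod (B k j))\<^sup>2)) = (ctrans B \<cdot> B) j j"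
      using True by (auto simp: ein_def ctrans_def complex_norm_square mult.commute
          simp del: of_real_power intro!: sum.cong)
    then have "(\<Sum>k\<in>idx N. (cmod (B k j))\<^sup>2) = 0"
      using assms(2) by (metis of_real_eq_0_iff of_real_sum zero_fun_def)
    then have "cmod (B i j) ^ 2 = 0"
      using True finite_idx[of N] by (subst (asm) sum_nonneg_eq_0_iff) auto
    then show ?thesis by simp
  qed (use assms(1) in \<open>auto simp: tensor2_def\<close>)
qed

lemma tpow_add: "tensor2 N D \<Longrightarrow> tpow N D (a + b) = tpow N D a \<cdot> tpow N D b"
  by (induction a) (simp_all add: ein_assoc)

lemma tpow_Suc_right: "tensor2 N D \<Longrightarrow> tpow N D (Suc j) = tpow N D j \<cdot> D"
  using tpow_add[of D j 1] by simp

lemma ein_tpow_commute: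
  assumes "tensor2 N A" and "tensor2 N B" and "A \<cdot> B = B \<cdot> A"
  shows "tpow N A i \<cdot> B = B \<cdot> tpow N A i"
proof (induction i)
  case 0
  show ?case using \<open>tensor2 N B\<close> by simp
next
  case (Suc i)
  have "tpow N A (Suc i) \<cdot> B = A \<cdot> B \<cdot> tpow N A i" by (simp add: ein_assoc Suc)
  also have "\<dots> = B \<cdot> tpow N A (Suc i)" by (simp add: assms(3) flip: ein_assoc)
  finally show ?case .
qed

lemma tpow_tpow_commute:
  assumes "tensor2 N A" and "tensor2 N B" and "A \<cdot> B = B \<cdot> A"
  shows "tpow N A i \<cdot> tpow N B j = tpow N B j \<cdot> tpow N A i"
  by (metis assms ein_tpow_commute tensor2_tpow)

definition unit_tensor2 :: "nat list \<times> nat list \<Rightarrow> nat list \<Rightarrow> nat list \<Rightarrow> complex" where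
  "unit_tensor2 p = (\<lambda>i j. if (i, j) = p then 1 else 0)"

lemma tensor2_in_span_units:
  assumes "tensor2 N A"
  shows "A \<in> tmat.span (unit_tensor2 ` (idx N \<times> idx N))"
proof -
  have "A = (\<Sum>p\<in>idx N \<times> idx N. tscale2 (A (fst p) (snd p)) (unit_tensor2 p))"
    using assms finite_idx[of N]
    by (auto simp: fun_eq_iff sum_fun_apply tscale2_def unit_tensor2_def tensor2_def if_distrib
        cong: if_cong)
  also have "\<dots> \<in> tmat.span (unit_tensor2 ` (idx N \<times> idx N))"
    by (intro tmat.span_sum tmat.span_scale tmat.span_base) auto
  finally show ?thesis .
qed

lemma tpow_linearly_dependent:
  assumes "tensor2 N D"
  obtains c r i where "(\<Sum>i\<le>r. tscale2 (c i) (tpow N D i)) = 0" and "i \<le> r" and "c i \<noteq> 0"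
proof -
  define U where "U = unit_tensor2 ` (idx N \<times> idx N)"
  define r where "r = card U"
  have "finite U" using finite_idx[of N] by (simp add: U_def)
  show ?thesis
  proof (cases "inj_on (tpow N D) {..r}")
    case False
    then obtain i j where ij: "i \<le> r" "j \<le> r" "i < j" "tpow N D i = tpow N D j"
      unfolding inj_on_def by (metis atMost_iff linorder_neqE_nat)
    define c where "c l = (if l = j then 1 else if l = i then -1 else (0::complex))" for l
    have "(\<Sum>l\<le>r. tscale2 (c l) (tpow N D l)) = (\<Sum>l\<in>{i, j}. tscale2 (c l) (tpow N D l))"
      using ij by (intro sum.mono_neutral_right) (auto simp: c_def tscale2_def fun_eq_iff)
    also have "\<dots> = 0" using ij by (auto simp: c_def tscale2_def fun_eq_iff)
    finally show ?thesis using that[of c r j] ij by (simp add: c_def)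
  next
    case True
    define P where "P = tpow N D ` {..r}"
    have "P \<subseteq> tmat.span U" unfolding P_def U_def using tensor2_in_span_units by auto
    moreover have "card U < card P" using True by (simp add: P_def r_def card_image)
    ultimately have "tmat.dependent P"
      using tmat.independent_span_bound[OF \<open>finite U\<close>] by fastforce
    then obtain t u where tu: "finite t" "t \<subseteq> P" "(\<Sum>v\<in>t. tscale2 (u v) v) = 0"
      and "\<exists>v\<in>t. u v \<noteq> 0"
      unfolding tmat.dependent_explicit by blast
    then obtain l where l: "l \<le> r" "tpow N D l \<in> t" "u (tpow N D l) \<noteq> 0"
      by (auto simp: P_def)
    define c where "c l = (if tpow N D l \<in> t then u (tpow N D l) else 0)" for l
    have "(\<Sum>l\<le>r. tscale2 (c l) (tpow N D l)) = (\<Sum>v\<in>P. tscale2 (if v \<in> t then u v else 0) v)"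
      unfolding P_def using True by (simp add: sum.reindex c_def)
    also have "\<dots> = (\<Sum>v\<in>t. tscale2 (u v) v)"
      using tu(1,2) by (intro sum.mono_neutral_cong_right) (auto simp: P_def)
    also have "\<dots> = 0" by (rule tu(3))
    finally show ?thesis using that[of c r l] l by (simp add: c_def)
  qed
qed

lemma tpow_eq_tpow_Suc_ein_of_dependence:
  assumes "tensor2 N D" and dep: "(\<Sum>i\<le>r. tscale2 (c i) (tpow N D i)) = 0"
    and "m \<le> r" and "c m \<noteq> 0" and below: "\<And>i. i < m \<Longrightarrow> c i = 0"
  obtains X where "tensor2 N X" and "D \<cdot> X = X \<cdot> D" and "tpow N D m = tpow N D (Suc m) \<cdot> X"
proof -
  define Q where "Q = (\<Sum>i\<in>{Suc m..r}. tscale2 (c i) (tpow N D (i - Suc m)))"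
  have "0 = (\<Sum>i\<in>{m..r}. tscale2 (c i) (tpow N D i))"
    unfolding dep[symmetric] using below by (intro sum.mono_neutral_right) auto
  also have "\<dots> = tscale2 (c m) (tpow N D m) + (\<Sum>i\<in>{Suc m..r}. tscale2 (c i) (tpow N D i))"
    using \<open>m \<le> r\<close> by (simp add: sum.atLeast_Suc_atMost)
  also have "(\<Sum>i\<in>{Suc m..r}. tscale2 (c i) (tpow N D i)) = tpow N D (Suc m) \<cdot> Q"
    unfolding Q_def ein_sum_right ein_tscale2_right
  proof (intro sum.cong refl)
    fix i assume "i \<in> {Suc m..r}"
    then have "tpow N D i = tpow N D (Suc m + (i - Suc m))" by simp
    then show "tscale2 (c i) (tpow N D i) = tscale2 (c i) (tpow N D (Suc m) \<cdot> tpow N D (i - Suc m))"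
      by (simp only: tpow_add[OF assms(1)])
  qed
  finally have "tscale2 (c m) (tpow N D m) + tpow N D (Suc m) \<cdot> Q = 0"
    by (rule sym)
  then have Q: "tpow N D (Suc m) \<cdot> Q = - tscale2 (c m) (tpow N D m)"
    by (simp only: add_eq_0_iff)
  define X where "X = tscale2 (- inverse (c m)) Q"
  have "tensor2 N X" unfolding X_def Q_def by (intro tensor2_tscale2 tensor2_sum) simp
  moreover have "D \<cdot> Q = Q \<cdot> D"
    unfolding Q_def ein_sum_left ein_sum_right ein_tscale2_left ein_tscale2_right
    by (intro sum.cong refl) (simp add: tpow_Suc_right[OF assms(1), symmetric])
  then have "D \<cdot> X = X \<cdot> D" by (simp only: X_def ein_tscale2_left ein_tscale2_right)
  moreover have "tpow N D (Suc m) \<cdot> X = tscale2 (- inverse (c m)) (- tscale2 (c m) (tpow N D m))"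
    by (simp only: X_def ein_tscale2_right Q)
  then have "tpow N D m = tpow N D (Suc m) \<cdot> X"
    using \<open>c m \<noteq> 0\<close> by (simp add: tmat.scale_minus_right)
  ultimately show ?thesis using that by blast
qed

lemma tpow_eq_tpow_Suc_ein_commuting:
  assumes "tensor2 N D"
  obtains m X where "tensor2 N X" and "D \<cdot> X = X \<cdot> D" and "tpow N D m = tpow N D (Suc m) \<cdot> X"
proof -
  obtain c r i where dep: "(\<Sum>i\<le>r. tscale2 (c i) (tpow N D i)) = 0" and "i \<le> r" "c i \<noteq> 0"
    using tpow_linearly_dependent[OF assms] .
  define m where "m = (LEAST i. c i \<noteq> 0)"
  have "c m \<noteq> 0" unfolding m_def by (rule LeastI) (rule \<open>c i \<noteq> 0\<close>)
  moreover have "m \<le> r" using Least_le[of "\<lambda>i. c i \<noteq> 0" i] \<open>c i \<noteq> 0\<close> \<open>i \<le> r\<close> by (simp add: m_def)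
  moreover have "c j = 0" if "j < m" for j using not_less_Least[OF that[unfolded m_def]] by simp
  ultimately show ?thesis using tpow_eq_tpow_Suc_ein_of_dependence[OF assms dep] that by metis
qed

lemma hermitian_square_cancel:
  assumes "ctrans M = M" and "M \<cdot> M \<cdot> U = 0"
  shows "M \<cdot> U = 0"
proof (rule ctrans_ein_self_eq_0)
  have "ctrans (M \<cdot> U) \<cdot> M \<cdot> U = ctrans U \<cdot> M \<cdot> M \<cdot> U"
    using assms(1) by (simp add: ctrans_ein ein_assoc)
  then show "ctrans (M \<cdot> U) \<cdot> M \<cdot> U = 0" using assms(2) by simp
qed simp

lemma hermitian_tpow_cancel:
  assumes "tensor2 N M" and "ctrans M = M" and "tpow N M (Suc m) \<cdot> U = 0"
  shows "M \<cdot> U = 0"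
  using assms(3)
proof (induction m arbitrary: U)
  case 0
  have "M \<cdot> U = tpow N M (Suc 0) \<cdot> U" using assms(1) by simp
  also have "\<dots> = 0" by (rule "0")
  finally show ?case .
next
  case (Suc m)
  have "M \<cdot> M \<cdot> tpow N M m \<cdot> U = tpow N M (Suc (Suc m)) \<cdot> U" by (simp add: ein_assoc)
  also have "\<dots> = 0" by (rule Suc.prems)
  finally have "M \<cdot> tpow N M m \<cdot> U = 0" by (rule hermitian_square_cancel[OF assms(2)])
  then have "tpow N M (Suc m) \<cdot> U = 0" by (simp only: tpow.simps ein_assoc)
  then show ?case by (rule Suc.IH)
qed

definition is_group_inverse where
  "is_group_inverse M G \<longleftrightarrow> tensor2 N G \<and> M \<cdot> G \<cdot> M = M \<and> G \<cdot> M \<cdot> G = G \<and> M \<cdot> G = G \<cdot> M"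

lemma group_inverse_unique:
  assumes "is_group_inverse M G" and "is_group_inverse M H"
  shows "G = H"
proof -
  have G: "M \<cdot> G \<cdot> M = M" "G \<cdot> M \<cdot> G = G" "M \<cdot> G = G \<cdot> M"
    and H: "M \<cdot> H \<cdot> M = M" "H \<cdot> M \<cdot> H = H" "M \<cdot> H = H \<cdot> M"
    using assms by (auto simp: is_group_inverse_def)
  have "M \<cdot> G = (M \<cdot> H) \<cdot> (M \<cdot> G)" by (metis H(1) ein_assoc)
  also have "\<dots> = (H \<cdot> M) \<cdot> (G \<cdot> M)" by (simp only: H(3) G(3))
  also have "\<dots> = M \<cdot> H" by (metis G(1) H(3) ein_assoc)
  finally have MG: "M \<cdot> G = M \<cdot> H" .
  have "G = G \<cdot> (M \<cdot> G)" by (simp add: G(2))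
  also have "\<dots> = (G \<cdot> M) \<cdot> H" by (simp add: MG ein_assoc)
  also have "\<dots> = (H \<cdot> M) \<cdot> H" by (simp only: G(3)[symmetric] MG H(3))
  also have "\<dots> = H" using H(2) by (simp add: ein_assoc)
  finally show ?thesis .
qed

lemma is_group_inverse_ctrans:
  assumes "ctrans M = M" and "is_group_inverse M G"
  shows "is_group_inverse M (ctrans G)"
proof -
  have "ctrans (M \<cdot> G \<cdot> M) = M" "ctrans (G \<cdot> M \<cdot> G) = ctrans G" "ctrans (M \<cdot> G) = ctrans (G \<cdot> M)"
    using assms by (auto simp: is_group_inverse_def)
  then show ?thesis
    using assms by (simp add: is_group_inverse_def ctrans_ein ein_assoc)
qed

lemma hermitian_group_inverse_exists:
  assumes "tensor2 N M" and "ctrans M = M"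
  obtains G where "is_group_inverse M G" and "ctrans G = G"
proof -
  obtain m X where X: "tensor2 N X" "M \<cdot> X = X \<cdot> M" "tpow N M m = tpow N M (Suc m) \<cdot> X"
    using tpow_eq_tpow_Suc_ein_commuting[OF assms(1)] .
  have "tpow N M m \<cdot> M \<cdot> X = tpow N M m"
    by (metis X(3) tpow_Suc_right[OF assms(1)] ein_assoc)
  then have "tpow N M m \<cdot> (tid N - M \<cdot> X) = 0" by (simp add: ein_diff_right)
  \<comment> \<open>for Hermitian M the relation M^m = M^(m+1) X improves to M = M^2 X\<close>
  then have "tpow N M (Suc m) \<cdot> (tid N - M \<cdot> X) = 0" by (simp add: ein_assoc)
  then have "M \<cdot> (tid N - M \<cdot> X) = 0" by (rule hermitian_tpow_cancel[OF assms])
  then have MMX: "M \<cdot> M \<cdot> X = M" using assms(1) by (simp add: ein_diff_right)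
  have XM: "X \<cdot> M \<cdot> A = M \<cdot> X \<cdot> A" for A using X(2) by (simp flip: ein_assoc)
  have MMX': "M \<cdot> M \<cdot> X \<cdot> A = M \<cdot> A" for A using MMX by (simp flip: ein_assoc)
  define G where "G = M \<cdot> X \<cdot> X"
  have G: "is_group_inverse M G"
    unfolding is_group_inverse_def G_def by (simp add: XM MMX MMX' X(2)[symmetric] ein_assoc)
  then have "ctrans G = G"
    using group_inverse_unique is_group_inverse_ctrans[OF assms(2)] by blast
  with G show ?thesis using that by blast
qed

definition is_mp_inverse where
  "is_mp_inverse D Y \<longleftrightarrow> tensor2 N Y \<and> (D \<cdot> Y) \<cdot> D = D \<and> (Y \<cdot> D) \<cdot> Y = Y
      \<and> ctrans (D \<cdot> Y) = D \<cdot> Y \<and> ctrans (Y \<cdot> D) = Y \<cdot> D"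

lemma mp_inverse_unique:
  assumes "is_mp_inverse D Y" and "is_mp_inverse D Z"
  shows "Y = Z"
proof -
  have Y: "D \<cdot> Y \<cdot> D = D" "Y \<cdot> D \<cdot> Y = Y" "ctrans (D \<cdot> Y) = D \<cdot> Y" "ctrans (Y \<cdot> D) = Y \<cdot> D"
    and Z: "D \<cdot> Z \<cdot> D = D" "Z \<cdot> D \<cdot> Z = Z" "ctrans (D \<cdot> Z) = D \<cdot> Z" "ctrans (Z \<cdot> D) = Z \<cdot> D"
    using assms by (auto simp: is_mp_inverse_def ein_assoc)
  have "D \<cdot> Y = ctrans ((D \<cdot> Z) \<cdot> D \<cdot> Y)" by (metis Y(3) Z(1) ein_assoc)
  also have "\<dots> = ctrans (D \<cdot> Y) \<cdot> ctrans (D \<cdot> Z)" by (simp add: ctrans_ein ein_assoc)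
  also have "\<dots> = D \<cdot> Z" by (metis Y(1,3) Z(3) ein_assoc)
  finally have DY: "D \<cdot> Y = D \<cdot> Z" .
  have "Y \<cdot> D = ctrans ((Y \<cdot> D) \<cdot> Z \<cdot> D)" by (metis Y(4) Z(1) ein_assoc)
  also have "\<dots> = ctrans (Z \<cdot> D) \<cdot> ctrans (Y \<cdot> D)" by (simp add: ctrans_ein ein_assoc)
  also have "\<dots> = Z \<cdot> D" by (metis Y(1,4) Z(4) ein_assoc)
  finally have YD: "Y \<cdot> D = Z \<cdot> D" .
  have "Y = Y \<cdot> D \<cdot> Y" by (simp add: Y(2))
  also have "\<dots> = Z \<cdot> D \<cdot> Z" by (metis DY YD ein_assoc)
  also have "\<dots> = Z" by (simp add: Z(2))
  finally show ?thesis .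
qed

lemma mp_inverse_exists:
  assumes "tensor2 N D"
  obtains Y where "is_mp_inverse D Y"
proof -
  define M where "M = ctrans D \<cdot> D"
  have "tensor2 N M" and "ctrans M = M" by (auto simp: M_def ctrans_ein)
  then obtain G where G: "is_group_inverse M G" and "ctrans G = G"
    by (rule hermitian_group_inverse_exists)
  have MGM: "M \<cdot> G \<cdot> M = M" and GMG: "G \<cdot> M \<cdot> G = G" and "M \<cdot> G = G \<cdot> M"
    using G by (auto simp: is_group_inverse_def)
  define P where "P = G \<cdot> M"
  have "ctrans P = P" unfolding P_def
    by (simp add: ctrans_ein \<open>ctrans G = G\<close> \<open>ctrans M = M\<close> \<open>M \<cdot> G = G \<cdot> M\<close>)
  have MP: "M \<cdot> P = M" using MGM by (simp add: P_def)
  have PM: "P \<cdot> M = M" unfolding P_def by (metis MGM \<open>M \<cdot> G = G \<cdot> M\<close> ein_assoc)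
  have "D \<cdot> P = D"
  proof -
    have "ctrans (D - D \<cdot> P) \<cdot> (D - D \<cdot> P) = M - M \<cdot> P - (P \<cdot> M - P \<cdot> M \<cdot> P)"
      by (simp add: ctrans_diff ctrans_ein \<open>ctrans P = P\<close> ein_diff_left ein_diff_right
          M_def ein_assoc)
    also have "\<dots> = 0" by (simp add: MP PM flip: ein_assoc)
    finally have "D - D \<cdot> P = 0" by (rule ctrans_ein_self_eq_0[rotated]) (simp add: assms)
    then show ?thesis by simp
  qed
  define Y where "Y = G \<cdot> ctrans D"
  have "(D \<cdot> Y) \<cdot> D = D" using \<open>D \<cdot> P = D\<close> by (simp add: Y_def P_def M_def ein_assoc)
  moreover have "(Y \<cdot> D) \<cdot> Y = Y" unfolding Y_def M_def by (metis GMG M_def ein_assoc)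
  moreover have "ctrans (D \<cdot> Y) = D \<cdot> Y"
    by (simp add: Y_def ctrans_ein \<open>ctrans G = G\<close> ein_assoc)
  moreover have "ctrans (Y \<cdot> D) = Y \<cdot> D"
    using \<open>ctrans P = P\<close> by (simp add: Y_def P_def M_def ein_assoc)
  ultimately have "is_mp_inverse D Y"
    using G by (simp add: is_mp_inverse_def Y_def is_group_inverse_def)
  then show ?thesis by (rule that)
qed

lemma is_mp_inverse_mpinv:
  assumes "tensor2 N D"
  shows "is_mp_inverse D (mpinv N D)"
proof -
  obtain Y where "is_mp_inverse D Y" using mp_inverse_exists[OF assms] .
  then have "\<exists>!Y. is_mp_inverse D Y" using mp_inverse_unique by blast
  then show ?thesis unfolding mpinv_def is_mp_inverse_def[symmetric] by (rule theI')
qed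

lemma einv_add: "einv N A (E + F) = einv N A E + einv N A F"
  by (auto simp: einv_def fun_eq_iff algebra_simps sum.distrib)

lemma einv_tscale1: "einv N A (tscale1 c E) = tscale1 c (einv N A E)"
  by (auto simp: einv_def tscale1_def fun_eq_iff algebra_simps sum_distrib_left)

lemma subspace_trange: "tvec.subspace (trange N A)"
  unfolding tvec.subspace_def trange_def
proof (intro conjI ballI allI)
  have "einv N A 0 = 0" by (simp add: einv_def fun_eq_iff)
  then show "0 \<in> {einv N A E |E. tensor1 N E}" by (force simp: tensor1_def)
next
  fix x y assume "x \<in> {einv N A E |E. tensor1 N E}" "y \<in> {einv N A E |E. tensor1 N E}"
  then obtain E F where "x = einv N A E" "y = einv N A F" "tensor1 N E" "tensor1 N F" by blast
  then show "x + y \<in> {einv N A E |E. tensor1 N E}"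
    by (intro CollectI exI[of _ "E + F"]) (auto simp: einv_add tensor1_def)
next
  fix c x assume "x \<in> {einv N A E |E. tensor1 N E}"
  then obtain E where "x = einv N A E" "tensor1 N E" by blast
  then show "tscale1 c x \<in> {einv N A E |E. tensor1 N E}"
    by (intro CollectI exI[of _ "tscale1 c E"] conjI, simp only: einv_tscale1)
      (simp add: tensor1_def tscale1_def)
qed

lemma trange_subset_span_columns:
  "trange N A \<subseteq> tvec.span ((\<lambda>j i. if i \<in> idx N then A i j else 0) ` idx N)"
proof
  fix x assume "x \<in> trange N A"
  then obtain E where x: "x = einv N A E" by (auto simp: trange_def)
  have "x = (\<Sum>j\<in>idx N. tscale1 (E j) (\<lambda>i. if i \<in> idx N then A i j else 0))"
    unfolding x by (auto simp: fun_eq_iff sum_fun_apply einv_def tscale1_def mult.commute)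
  also have "\<dots> \<in> tvec.span ((\<lambda>j i. if i \<in> idx N then A i j else 0) ` idx N)"
    by (intro tvec.span_sum tvec.span_scale tvec.span_base) auto
  finally show "x \<in> tvec.span ((\<lambda>j i. if i \<in> idx N then A i j else 0) ` idx N)" .
qed

lemma trange_eq_of_cdim_eq:
  assumes "trange N A \<subseteq> trange N C" and "cdim (trange N A) = cdim (trange N C)"
  shows "trange N A = trange N C"
  using tvec.subspace_eq_of_dim_eq[OF assms(1) subspace_trange trange_subset_span_columns]
    assms finite_idx by (auto simp: cdim_eq_dim)

lemma trange_ein_subset: "trange N (B \<cdot> C) \<subseteq> trange N B"
  unfolding trange_def by (auto simp flip: einv_einv)

lemma trange_tpow_tind:
  assumes "tensor2 N D"
  shows "trange N (tpow N D (tind N D)) = trange N (tpow N D (Suc (tind N D)))"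
proof -
  have subset: "trange N (tpow N D (Suc n)) \<subseteq> trange N (tpow N D n)" for n
    by (metis trange_ein_subset tpow_Suc_right[OF assms])
  obtain m X where "tpow N D m = tpow N D (Suc m) \<cdot> X"
    using tpow_eq_tpow_Suc_ein_commuting[OF assms] .
  then have "trange N (tpow N D m) \<subseteq> trange N (tpow N D (Suc m))"
    by (metis trange_ein_subset)
  then have "cdim (trange N (tpow N D m)) = cdim (trange N (tpow N D (Suc m)))"
    using subset[of m] by (simp add: subset_antisym)
  then have "cdim (trange N (tpow N D (tind N D))) = cdim (trange N (tpow N D (Suc (tind N D))))"
    unfolding tind_def by (rule LeastI)
  then show ?thesis using subset by (intro trange_eq_of_cdim_eq[symmetric]) auto
qed

definition unit_tensor1 :: "nat list \<Rightarrow> nat list \<Rightarrow> complex" where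
  "unit_tensor1 j = (\<lambda>i. if i = j then 1 else 0)"

lemma einv_unit_tensor1:
  "i \<in> idx N \<Longrightarrow> j \<in> idx N \<Longrightarrow> einv N A (unit_tensor1 j) i = A i j"
  using finite_idx[of N]
  by (simp add: einv_def unit_tensor1_def if_distrib[of "\<lambda>x. _ * x"] cong: if_cong)

lemma factor_of_trange_subset:
  assumes "tensor2 N A" and "trange N A \<subseteq> trange N B"
  obtains W where "tensor2 N W" and "A = B \<cdot> W"
proof -
  have "\<exists>G. tensor1 N G \<and> einv N A (unit_tensor1 j) = einv N B G" for j
  proof -
    have "einv N A (unit_tensor1 j) = einv N A (einv N (tid N) (unit_tensor1 j))"
      using assms(1) by (simp add: einv_einv)
    then have "einv N A (unit_tensor1 j) \<in> trange N A" unfolding trange_def by auto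
    then show ?thesis using assms(2) unfolding trange_def by blast
  qed
  then obtain F where F: "\<And>j. tensor1 N (F j)" "\<And>j. einv N A (unit_tensor1 j) = einv N B (F j)"
    by metis
  define W where "W = (\<lambda>i j. if j \<in> idx N then F j i else 0)"
  have "tensor2 N W" using F(1) by (simp add: W_def tensor2_def tensor1_def)
  moreover have "A = B \<cdot> W"
  proof (intro ext)
    fix i j
    show "A i j = (B \<cdot> W) i j"
    proof (cases "i \<in> idx N \<and> j \<in> idx N")
      case True
      then have "A i j = einv N B (F j) i" by (simp flip: F(2) add: einv_unit_tensor1)
      then show ?thesis using True by (simp add: ein_def einv_def W_def)
    qed (use assms(1) in \<open>auto simp: ein_def tensor2_def\<close>)
  qed
  ultimately show ?thesis by (rule that)
qed

lemma tpow_eq_tpow_add_ein_tpow: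
  assumes "tensor2 N D" and "tpow N D m = tpow N D (Suc m) \<cdot> X"
  shows "tpow N D m = tpow N D (m + j) \<cdot> tpow N X j"
proof (induction j)
  case (Suc j)
  have "m + Suc j = j + Suc m" by simp
  then have "tpow N D (m + Suc j) \<cdot> tpow N X (Suc j)
      = tpow N D j \<cdot> (tpow N D (Suc m) \<cdot> X) \<cdot> tpow N X j"
    by (simp only: tpow_add[OF assms(1)] tpow.simps(2)[of N X] ein_assoc)
  also have "\<dots> = tpow N D (m + j) \<cdot> tpow N X j"
    by (simp only: assms(2)[symmetric] add.commute[of m] tpow_add[OF assms(1)] ein_assoc)
  finally show ?case using Suc.IH by simp
qed (simp add: assms(1))

definition is_drazin_inverse where
  "is_drazin_inverse D k Y \<longleftrightarrow> tensor2 N Y \<and> Y \<cdot> tpow N D (Suc k) = tpow N D k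
      \<and> (Y \<cdot> D) \<cdot> Y = Y \<and> D \<cdot> Y = Y \<cdot> D"

lemma drazin_inverse_tpow:
  assumes "tensor2 N D" and "tensor2 N Y" and "Y \<cdot> D \<cdot> Y = Y" and "D \<cdot> Y = Y \<cdot> D"
  shows "tpow N Y (Suc j) \<cdot> tpow N D j = Y"
proof (induction j)
  case (Suc j)
  have "tpow N Y (Suc (Suc j)) \<cdot> tpow N D (Suc j) = Y \<cdot> (tpow N Y (Suc j) \<cdot> tpow N D j) \<cdot> D"
    by (simp only: tpow.simps(2)[of N Y "Suc j"] tpow_Suc_right[OF assms(1)] ein_assoc)
  also have "\<dots> = Y" using Suc.IH assms(3,4) by simp
  finally show ?case .
qed (simp add: assms(2))

lemma drazin_inverse_unique:
  assumes "tensor2 N D" and "is_drazin_inverse D k Y" and "is_drazin_inverse D k Z"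
  shows "Y = Z"
proof -
  have Y: "tensor2 N Y" "Y \<cdot> tpow N D (Suc k) = tpow N D k" "Y \<cdot> D \<cdot> Y = Y" "D \<cdot> Y = Y \<cdot> D"
    and Z: "tensor2 N Z" "Z \<cdot> tpow N D (Suc k) = tpow N D k" "Z \<cdot> D \<cdot> Z = Z" "D \<cdot> Z = Z \<cdot> D"
    using assms(2,3) by (auto simp: is_drazin_inverse_def ein_assoc)
  note Ypow = drazin_inverse_tpow[OF assms(1) Y(1,3,4)]
  note Zpow = drazin_inverse_tpow[OF assms(1) Z(1,3,4)]
  have "Y = tpow N Y (Suc k) \<cdot> tpow N D k" by (rule Ypow[symmetric])
  also have "\<dots> = tpow N Y (Suc k) \<cdot> Z \<cdot> tpow N D (Suc k)" by (simp only: Z(2))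
  also have "\<dots> = tpow N Y (Suc k) \<cdot> tpow N D (Suc k) \<cdot> Z"
    by (simp only: ein_tpow_commute[OF assms(1) Z(1,4)])
  also have "\<dots> = (tpow N Y (Suc k) \<cdot> tpow N D k) \<cdot> D \<cdot> Z"
    by (simp only: tpow_Suc_right[OF assms(1)] ein_assoc)
  also have "\<dots> = Y \<cdot> D \<cdot> Z" by (simp only: Ypow)
  finally have YDZ: "Y = Y \<cdot> D \<cdot> Z" .
  have DZ: "tpow N D k \<cdot> tpow N Z (Suc k) = Z"
    by (metis Zpow tpow_tpow_commute[OF Z(1) assms(1) Z(4)[symmetric]])
  have "Z = (Y \<cdot> tpow N D (Suc k)) \<cdot> tpow N Z (Suc k)" by (simp only: Y(2) DZ)
  also have "\<dots> = Y \<cdot> D \<cdot> Z" by (simp only: tpow.simps(2)[of N D] ein_assoc DZ)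
  finally show ?thesis using YDZ by simp
qed

lemma drazin_inverse_exists:
  assumes "tensor2 N D" and "tensor2 N W" and "tpow N D k = tpow N D (Suc k) \<cdot> W"
  obtains Y where "is_drazin_inverse D k Y"
proof -
  obtain m X where X: "tensor2 N X" "D \<cdot> X = X \<cdot> D" "tpow N D m = tpow N D (Suc m) \<cdot> X"
    using tpow_eq_tpow_Suc_ein_commuting[OF assms(1)] .
  have XD: "tpow N X j \<cdot> tpow N D i = tpow N D i \<cdot> tpow N X j" for i j
    using tpow_tpow_commute[OF X(1) assms(1) X(2)[symmetric]] .
  define Y where "Y = tpow N D m \<cdot> tpow N X (Suc m)"
  have YDm: "Y \<cdot> tpow N D (Suc m) = tpow N D m"
  proof -
    have "Y \<cdot> tpow N D (Suc m) = tpow N D (m + Suc m) \<cdot> tpow N X (Suc m)"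
      by (simp only: Y_def ein_assoc XD tpow_add[OF assms(1)])
    also have "\<dots> = tpow N D m"
      by (rule tpow_eq_tpow_add_ein_tpow[OF assms(1) X(3), symmetric])
    finally show ?thesis .
  qed
  have "tensor2 N Y" by (simp add: Y_def)
  moreover have "D \<cdot> Y = Y \<cdot> D"
    unfolding Y_def
    by (metis ein_tpow_commute[OF assms(1,1) refl] ein_tpow_commute[OF X(1) assms(1) X(2)[symmetric]]
        ein_assoc)
  moreover have "(Y \<cdot> D) \<cdot> Y = Y"
  proof -
    have "(Y \<cdot> D) \<cdot> Y = (Y \<cdot> D \<cdot> tpow N D m) \<cdot> tpow N X (Suc m)"
      by (simp add: Y_def ein_assoc)
    also have "\<dots> = tpow N D m \<cdot> tpow N X (Suc m)"
      by (simp only: tpow.simps(2)[of N D m, symmetric] YDm)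
    also have "\<dots> = Y" by (simp only: Y_def)
    finally show ?thesis .
  qed
  moreover have "Y \<cdot> tpow N D (Suc k) = tpow N D k"
  proof -
    have Dk: "tpow N D k = tpow N D m \<cdot> tpow N D k \<cdot> tpow N W m"
      using tpow_eq_tpow_add_ein_tpow[OF assms(1,3), of m]
      by (simp only: add.commute[of k m] tpow_add[OF assms(1)] ein_assoc)
    have "Y \<cdot> tpow N D (Suc k) = Y \<cdot> D \<cdot> tpow N D k" by simp
    also have "\<dots> = Y \<cdot> D \<cdot> tpow N D m \<cdot> tpow N D k \<cdot> tpow N W m" by (simp only: Dk[symmetric])
    also have "\<dots> = tpow N D m \<cdot> tpow N D k \<cdot> tpow N W m"
      using YDm by (simp flip: ein_assoc)
    finally show ?thesis using Dk by simp
  qed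
  ultimately show ?thesis using that unfolding is_drazin_inverse_def by blast
qed

lemma is_drazin_inverse_drazin:
  assumes "tensor2 N D"
  shows "is_drazin_inverse D (tind N D) (drazin N D)"
proof -
  obtain W where "tensor2 N W" and "tpow N D (tind N D) = tpow N D (Suc (tind N D)) \<cdot> W"
    using factor_of_trange_subset[OF tensor2_tpow] trange_tpow_tind[OF assms] by blast
  then obtain Y where "is_drazin_inverse D (tind N D) Y"
    using drazin_inverse_exists[OF assms] by blast
  then have "\<exists>!Y. is_drazin_inverse D (tind N D) Y" using drazin_inverse_unique[OF assms] by blast
  then show ?thesis unfolding drazin_def Let_def is_drazin_inverse_def[symmetric] by (rule theI')
qed

lemma ein_drazin_tpow_tind:
  assumes "tensor2 N D"
  shows "D \<cdot> drazin N D \<cdot> tpow N D (tind N D) = tpow N D (tind N D)"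
proof -
  have "drazin N D \<cdot> tpow N D (Suc (tind N D)) = tpow N D (tind N D)"
    and "D \<cdot> drazin N D = drazin N D \<cdot> D"
    using is_drazin_inverse_drazin[OF assms] by (auto simp: is_drazin_inverse_def)
  then show ?thesis by (metis tpow.simps(2) ein_assoc)
qed

lemma ein_mpinv_tpow_tind:
  assumes "tensor2 N D"
  shows "D \<cdot> mpinv N D \<cdot> tpow N D (tind N D) = tpow N D (tind N D)"
proof -
  have "D \<cdot> mpinv N D \<cdot> D = D"
    using is_mp_inverse_mpinv[OF assms] by (simp add: is_mp_inverse_def ein_assoc)
  then show ?thesis by (metis ein_drazin_tpow_tind[OF assms] ein_assoc)
qed

lemma cmp_ein_tpow_tind:
  assumes "tensor2 N D"
  shows "cmp N D \<cdot> tpow N D (tind N D) = mpinv N D \<cdot> tpow N D (tind N D)"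
  by (simp add: cmp_def ein_assoc ein_mpinv_tpow_tind[OF assms] ein_drazin_tpow_tind[OF assms])

end

theorem mainTheorem14:
  fixes N :: "nat list" and D :: "nat list \<Rightarrow> nat list \<Rightarrow> complex"
    and B :: "nat list \<Rightarrow> complex" and k :: nat
  assumes "N \<noteq> []" and "\<forall>n\<in>set N. 0 < n"
    and "tensor2 N D"
    and "tind N D = k"
    and "B \<in> trange N (tpow N D k)"
  shows "einv N D (einv N (cmp N D) B) = B
    \<and> einv N (cmp N D) B \<in> trange N (ein N (mpinv N D) (tpow N D k))
    \<and> (\<forall>Z. tensor1 N Z \<and> einv N D Z = B \<and> Z \<in> trange N (ein N (mpinv N D) (tpow N D k))
           \<longrightarrow> Z = einv N (cmp N D) B)"
proof -
  note solve = ein_mpinv_tpow_tind[OF assms(3), unfolded assms(4)]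
  note cmp_tpow = cmp_ein_tpow_tind[OF assms(3), unfolded assms(4)]
  obtain E where "tensor1 N E" and B: "einv N (tpow N D k) E = B"
    using assms(5) by (auto simp: trange_def)
  have cmpB: "einv N (cmp N D) B = einv N (mpinv N D) B"
    unfolding B[symmetric] einv_einv cmp_tpow ..
  have "einv N (mpinv N D) B = einv N (ein N (mpinv N D) (tpow N D k)) E"
    by (simp add: einv_einv flip: B)
  then have range: "einv N (cmp N D) B \<in> trange N (ein N (mpinv N D) (tpow N D k))"
    unfolding cmpB trange_def using \<open>tensor1 N E\<close> by blast
  have solution: "einv N D (einv N (cmp N D) B) = B"
    unfolding cmpB by (simp add: einv_einv ein_assoc solve flip: B)
  have "Z = einv N (cmp N D) B"
    if DZ: "einv N D Z = B" and "Z \<in> trange N (ein N (mpinv N D) (tpow N D k))" for Z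
  proof -
    obtain G where Z: "Z = einv N (mpinv N D) (einv N (tpow N D k) G)"
      using \<open>Z \<in> _\<close> by (auto simp: trange_def einv_einv)
    have "einv N (tpow N D k) G = B"
      using DZ by (simp add: Z einv_einv ein_assoc solve)
    then show ?thesis by (simp add: Z cmpB)
  qed
  with range solution show ?thesis by blast
qed

end
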